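(* Let $G$ be a compact topological group admitting a continuous $2$-transitive action on a topological space $X$ satisfying the $T_1$ separation axiom (all singletons closed). Then $X$ is finite.
   Context: Continuity of the action means (at least) that each orbit map $G\to X$, $g\mapsto g\cdot x$, is continuous. *)

theory Defs
  imports "HOL-Analysis.Analysis" "HOL-Algebra.Group_Action"
begin

definition topological_group :: "('g, 'b) monoid_scheme \<Rightarrow> 'g topology \<Rightarrow> bool" where
  "topological_group G T \<longleftrightarrow>
     group G \<and> topspace T = carrier G \<and>
     continuous_map (prod_topology T T) T (\<lambda>(x, y). x \<otimes>\<^bsub>G\<^esub> y) \<and>
     continuous_map T T (\<lambda>x. inv\<^bsub>G\<^esub> x)"

definition continuous_action ::
  "('g, 'b) monoid_scheme \<Rightarrow> 'g topology \<Rightarrow> 'x topology \<Rightarrow> ('g \<Rightarrow> 'x \<Rightarrow> 'x) \<Rightarrow> bool" where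
  "continuous_action G T X \<phi> \<longleftrightarrow>
     group_action G (topspace X) \<phi> \<and>
     (\<forall>x \<in> topspace X. continuous_map T X (\<lambda>g. \<phi> g x))"

definition two_transitive :: "('g, 'b) monoid_scheme \<Rightarrow> 'x set \<Rightarrow> ('g \<Rightarrow> 'x \<Rightarrow> 'x) \<Rightarrow> bool" where
  "two_transitive G E \<phi> \<longleftrightarrow>
     (\<forall>x1 \<in> E. \<forall>x2 \<in> E. \<forall>y1 \<in> E. \<forall>y2 \<in> E. x1 \<noteq> x2 \<longrightarrow> y1 \<noteq> y2 \<longrightarrow>
        (\<exists>g \<in> carrier G. \<phi> g x1 = y1 \<and> \<phi> g x2 = y2))"

end

theory Submission
  imports Defs
begin

(* Fix a point a.  The orbit map g \<mapsto> g a is onto X (a 2-transitive action on a set with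
   two points is transitive), and its fibres are the transporters {g. g a = y}.  The heart of
   the argument is that every transporter is OPEN in G: the stabiliser P of y is closed
   (X is T1) and hence compact; for g in the transporter and any z \<noteq> y, the continuous map
   (p, v) \<mapsto> p\<inverse> v a sends P \<times> {g} into X - {z}, so by the tube lemma it sends P \<times> V
   into X - {z} for a neighbourhood V of g.  If some v \<in> V had v a \<noteq> y, 2-transitivity
   would give p \<in> P with p z = v a, i.e. p\<inverse> v a = z, a contradiction; so V lies in the
   transporter.  Finally, a map on a compact space whose fibres are all open has finite
   image, which applied to the orbit map gives the theorem. *)

text \<open>A map out of a compact space all of whose fibres are open has finite image:
  the fibres form an open cover, and a finite subcover already exhausts the image.\<close>
lemma compact_space_open_fibres_finite_image:
  assumes "compact_space T"
    and fibres_open: "\<And>t. t \<in> topspace T \<Longrightarrow> openin T {s \<in> topspace T. h s = h t}"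
  shows "finite (h ` topspace T)"
proof -
  define fibre where "fibre = (\<lambda>y. {s \<in> topspace T. h s = y})"
  have "\<forall>U \<in> fibre ` h ` topspace T. openin T U" and "topspace T \<subseteq> \<Union> (fibre ` h ` topspace T)"
    using fibres_open unfolding fibre_def by auto
  then obtain \<F> where \<F>: "finite \<F>" "\<F> \<subseteq> fibre ` h ` topspace T" "topspace T \<subseteq> \<Union> \<F>"
    using assms(1) unfolding compact_space_alt by meson
  then obtain Y where Y: "finite Y" "\<F> = fibre ` Y"
    by (meson finite_subset_image)
  have "h ` topspace T \<subseteq> Y"
    using \<F>(3) unfolding Y(2) fibre_def by auto
  then show ?thesis
    using Y(1) finite_subset by blast
qed

lemma topological_group_continuous_inv_mult:
  assumes "topological_group G T"
  shows "continuous_map (prod_topology T T) T (\<lambda>pv. inv\<^bsub>G\<^esub> (fst pv) \<otimes>\<^bsub>G\<^esub> snd pv)"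
proof -
  have mult: "continuous_map (prod_topology T T) T (\<lambda>(x, y). x \<otimes>\<^bsub>G\<^esub> y)"
    and inverse: "continuous_map T T (\<lambda>x. inv\<^bsub>G\<^esub> x)"
    using assms unfolding topological_group_def by auto
  have "continuous_map (prod_topology T T) T (\<lambda>pv. inv\<^bsub>G\<^esub> (fst pv))"
    using continuous_map_compose[OF continuous_map_fst inverse] by (simp add: o_def)
  then have "continuous_map (prod_topology T T) (prod_topology T T) (\<lambda>pv. (inv\<^bsub>G\<^esub> (fst pv), snd pv))"
    using continuous_map_snd by (rule continuous_map_pairedI)
  from continuous_map_compose[OF this mult]
  show ?thesis
    by (simp add: o_def case_prod_beta)
qed

definition transporter :: "('g, 'b) monoid_scheme \<Rightarrow> ('g \<Rightarrow> 'x \<Rightarrow> 'x) \<Rightarrow> 'x \<Rightarrow> 'x \<Rightarrow> 'g set"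
  where "transporter G \<phi> a y = {g \<in> carrier G. \<phi> g a = y}"

lemma two_transitiveD:
  assumes "two_transitive G E \<phi>"
    and "x1 \<in> E" "x2 \<in> E" "y1 \<in> E" "y2 \<in> E" "x1 \<noteq> x2" "y1 \<noteq> y2"
  shows "\<exists>g \<in> carrier G. \<phi> g x1 = y1 \<and> \<phi> g x2 = y2"
  using assms unfolding two_transitive_def by blast

lemma two_transitive_transitive:
  assumes "two_transitive G E \<phi>"
    and "a \<in> E" "b \<in> E" "a \<noteq> b" "y \<in> E"
  shows "\<exists>g \<in> carrier G. \<phi> g a = y"
proof -
  obtain w where "w \<in> E" "w \<noteq> y"
    using assms(2-4) by blast
  then show ?thesis
    using two_transitiveD[OF assms(1,2,3,5)] assms(4) by blast
qed

lemma stabilizer_compactin: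
  assumes "topspace T = carrier G" "compact_space T" "t1_space X"
    and "continuous_action G T X \<phi>" "y \<in> topspace X"
  shows "compactin T (stabilizer G \<phi> y)"
proof -
  have "continuous_map T X (\<lambda>g. \<phi> g y)" and "closedin X {y}"
    using assms unfolding continuous_action_def t1_space_closedin_singleton by auto
  then have "closedin T {g \<in> topspace T. \<phi> g y \<in> {y}}"
    by (rule closedin_continuous_map_preimage)
  then show ?thesis
    using assms(1,2) closedin_compact_space unfolding stabilizer_def by force
qed

lemma transporter_open:
  assumes "topological_group G T" "compact_space T" "t1_space X"
    and action: "continuous_action G T X \<phi>"
    and two_trans: "two_transitive G (topspace X) \<phi>"
    and a: "a \<in> topspace X" and y: "y \<in> topspace X" and z: "z \<in> topspace X" "z \<noteq> y"
  shows "openin T (transporter G \<phi> a y)"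
proof -
  interpret group_action G "topspace X" \<phi>
    using action unfolding continuous_action_def by auto
  have carrier: "topspace T = carrier G" and "group G"
    using assms(1) unfolding topological_group_def by auto
  interpret group G by fact
  let ?P = "stabilizer G \<phi> y"
  define f where "f = (\<lambda>pv. \<phi> (inv\<^bsub>G\<^esub> (fst pv) \<otimes>\<^bsub>G\<^esub> snd pv) a)"
  have f_eq: "f (p, v) = \<phi> (inv\<^bsub>G\<^esub> p) (\<phi> v a)" if "p \<in> carrier G" "v \<in> carrier G" for p v
    unfolding f_def using composition_rule[OF a] that by simp
  have "continuous_map T X (\<lambda>g. \<phi> g a)"
    using action a unfolding continuous_action_def by blast
  with topological_group_continuous_inv_mult[OF assms(1)]
  have "continuous_map (prod_topology T T) X f"
    unfolding f_def by (rule continuous_map_compose[unfolded o_def])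
  moreover have "openin X (topspace X - {z})"
    using assms(3) z(1) unfolding t1_space_closedin_singleton by blast
  ultimately have W_open: "openin (prod_topology T T) {pv \<in> topspace (prod_topology T T). f pv \<in> topspace X - {z}}"
    (is "openin _ ?W") by (rule openin_continuous_map_preimage)
  show ?thesis
    unfolding openin_subopen[of T "transporter G \<phi> a y"]
  proof
    fix g assume "g \<in> transporter G \<phi> a y"
    then have g: "g \<in> carrier G" "\<phi> g a = y"
      unfolding transporter_def by auto
    have stabilizer_tube: "?P \<times> {g} \<subseteq> ?W"
    proof
      fix pv assume "pv \<in> ?P \<times> {g}"
      then obtain p where p: "pv = (p, g)" "p \<in> carrier G" "\<phi> p y = y"
        unfolding stabilizer_def by auto
      have "f pv = y"
        using f_eq[OF p(2) g(1)] orbit_sym_aux[OF p(2) y p(3)] g(2) p(1) by simp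
      then show "pv \<in> ?W"
        using p(1,2) g(1) carrier y z(2) by simp
    qed
    have "g \<in> topspace T"
      using g(1) carrier by simp
    then obtain U V where "openin T V" "g \<in> V" "?P \<subseteq> U" "U \<times> V \<subseteq> ?W"
      using tube_lemma_left[OF W_open stabilizer_compactin[OF carrier assms(2,3) action y]
          _ stabilizer_tube] by blast
    then have V: "openin T V" "g \<in> V" "?P \<times> V \<subseteq> ?W"
      by blast+
    have "V \<subseteq> transporter G \<phi> a y"
    proof
      fix v assume "v \<in> V"
      then have v: "v \<in> carrier G"
        using openin_subset[OF V(1)] carrier by auto
      have "\<phi> v a = y"
      proof (rule ccontr)
        assume "\<phi> v a \<noteq> y"
        moreover have "\<phi> v a \<in> topspace X"
          using element_image[OF v a] by simp
        ultimately obtain p where p: "p \<in> carrier G" "\<phi> p y = y" "\<phi> p z = \<phi> v a"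
          using two_transitiveD[OF two_trans y z(1) y] z(2) by metis
        then have "(p, v) \<in> ?W"
          using V(3) \<open>v \<in> V\<close> unfolding stabilizer_def by auto
        moreover have "f (p, v) = z"
          using f_eq[OF p(1) v] orbit_sym_aux[OF p(1) z(1) p(3)] by simp
        ultimately show False
          by simp
      qed
      then show "v \<in> transporter G \<phi> a y"
        using v unfolding transporter_def by simp
    qed
    then show "\<exists>V. openin T V \<and> g \<in> V \<and> V \<subseteq> transporter G \<phi> a y"
      using V by blast
  qed
qed

theorem mainTheorem6:
  fixes G :: "('g, 'b) monoid_scheme" and T :: "'g topology"
    and X :: "'x topology" and \<phi> :: "'g \<Rightarrow> 'x \<Rightarrow> 'x"
  assumes "topological_group G T"
    and "compact_space T"
    and "t1_space X"
    and "continuous_action G T X \<phi>"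
    and "two_transitive G (topspace X) \<phi>"
  shows "finite (topspace X)"
proof (cases "\<exists>a b. a \<in> topspace X \<and> b \<in> topspace X \<and> a \<noteq> b")
  case False
  show ?thesis
  proof (cases "topspace X = {}")
    case False
    then obtain c where "c \<in> topspace X"
      by blast
    with \<open>\<not> (\<exists>a b. _)\<close> have "topspace X \<subseteq> {c}"
      by blast
    then show ?thesis
      by (rule finite_subset) simp
  qed simp
next
  case True
  then obtain a b where ab: "a \<in> topspace X" "b \<in> topspace X" "a \<noteq> b"
    by blast
  interpret group_action G "topspace X" \<phi>
    using assms(4) unfolding continuous_action_def by auto
  have carrier: "topspace T = carrier G"
    using assms(1) unfolding topological_group_def by auto
  have onto: "(\<lambda>g. \<phi> g a) ` topspace T = topspace X"
    using element_image[OF _ ab(1)] two_transitive_transitive[OF assms(5) ab]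
    unfolding carrier by blast
  have "openin T {s \<in> topspace T. \<phi> s a = \<phi> t a}" if "t \<in> topspace T" for t
  proof -
    have "\<phi> t a \<in> topspace X"
      using onto that by blast
    moreover obtain z where "z \<in> topspace X" "z \<noteq> \<phi> t a"
      using ab by blast
    ultimately have "openin T (transporter G \<phi> a (\<phi> t a))"
      by (rule transporter_open[OF assms ab(1)])
    then show ?thesis
      unfolding transporter_def carrier .
  qed
  then have "finite ((\<lambda>g. \<phi> g a) ` topspace T)"
    by (rule compact_space_open_fibres_finite_image[OF assms(2)])
  then show ?thesis
    unfolding onto .
qed

end
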